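(* Assume the good gauge $b\equiv0$, $\beta_r\equiv0$. Then for every $f\in C^2(M)$ for which $g_f$ is Riemannian, \[ \frac{H_{f,r}}{\lambda_f}=\frac1{2\lambda_f^2}\Big(\mathrm{tr}_{\gamma_f}Q_r(d^Sf)+\partial_rf\,\mathrm{tr}_{\gamma_f}Q_t(d^Sf)-2\,\partial_rf\,\mathrm{div}_{\gamma_f}(\beta_f^T)\Big). \] If $f$ moreover solves the TMCF equation $\mathrm{div}_{\gamma_f}(\beta_f^T)+H_{f,r}\,\beta_f({\bf n}_f)-\frac12\mathrm{tr}_{\gamma_f}(\partial_t\gamma_f)=0$, then \[ \frac{H_{f,r}}{\lambda_f}=\frac1{2\lambda^2}\mathrm{tr}_{\gamma_f}Q_r(d^Sf). \]
   Context: Good-gauge setting: metric $\mathfrak g^{(4)}=-(N^2-|\beta^T|^2_\gamma)dt^2+2\beta^T\odot dt+\lambda^2dr^2+\gamma$ on $(\underline T,\infty)\times(r_0,\infty)\times S^2$, $\alpha:=N^2-|\beta^T|^2_\gamma$. $d^S$ is the exterior derivative along the spheres $S_r$, $\mathrm{div}_{\gamma_f}$ the divergence on $(S_r,\gamma_f)$. For a graph $M_f=\{t=f(r,p)\}$ with coefficients evaluated at $t=f$: $\beta_f^T=\beta^T-\alpha\,d^Sf$, $\beta_f=\beta-\alpha\,df$, $\gamma_f=\gamma+2\beta^T\odot d^Sf-\alpha(d^Sf)^2$, $b_f=\partial_rf\,\beta_f^T$, $\lambda_f^2=\lambda^2-(\alpha+|\beta_f^T|^2_{\gamma_f})(\partial_rf)^2$,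 $g_f=(\lambda_f^2+|b_f|^2_{\gamma_f})dr^2+2b_f\odot dr+\gamma_f$, ${\bf n}_f=\lambda_f^{-1}(\partial_r-b_f^{\sharp_{\gamma_f}})$, $H_{f,r}$ the mean curvature of $S_r$ in $(M_f,g_f)$, and $\partial_t\gamma_f$ the $t$-derivative at fixed $f$ of $\gamma+2\beta^T\odot d^Sf-\alpha(d^Sf)^2$. For a 1-form $\omega$ on $S_r$: $Q_r(\omega):=\partial_r\gamma+2\partial_r\beta^T\odot\omega-\partial_r\alpha\,\omega^2$, $Q_t(\omega):=\partial_t\gamma+2\partial_t\beta^T\odot\omega-\partial_t\alpha\,\omega^2$. *)

theory Defs
  imports "HOL-Analysis.Analysis"
begin

text \<open>Spacetime coordinates (t, r, y, z) where (y, z) are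
coordinates of a chart U of S^2. Tensors on the spheres are indexed by A, B in {0,1};
tensors on the slice M_f (coordinates r, y, z) by i, j in {0,1,2} (0 = r, 1 = y, 2 = z).\<close>

type_synonym sfield = "real \<Rightarrow> real \<Rightarrow> real \<Rightarrow> real \<Rightarrow> real"  (* t r y z *)
type_synonym mfield = "real \<Rightarrow> real \<Rightarrow> real \<Rightarrow> real"            (* r y z *)

fun Ck_on :: "nat \<Rightarrow> ('a::euclidean_space \<Rightarrow> real) \<Rightarrow> 'a set \<Rightarrow> bool" where
  "Ck_on 0 G S = continuous_on S G"
| "Ck_on (Suc k) G S = (G differentiable_on S \<and>
      (\<forall>i\<in>Basis. Ck_on k (\<lambda>x. frechet_derivative G (at x) i) S))"

definition smooth_on_set :: "('a::euclidean_space \<Rightarrow> real) \<Rightarrow> 'a set \<Rightarrow> bool" where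
  "smooth_on_set G S = (\<forall>k. Ck_on k G S)"

definition unc4 :: "sfield \<Rightarrow> real \<times> real \<times> real \<times> real \<Rightarrow> real" where
  "unc4 F = (\<lambda>(t, r, y, z). F t r y z)"

definition unc3 :: "mfield \<Rightarrow> real \<times> real \<times> real \<Rightarrow> real" where
  "unc3 F = (\<lambda>(r, y, z). F r y z)"

definition spacetime_dom :: "real \<Rightarrow> real \<Rightarrow> (real \<times> real) set \<Rightarrow> (real \<times> real \<times> real \<times> real) set" where
  "spacetime_dom T r0 U = {(t, r, y, z). T < t \<and> r0 < r \<and> (y, z) \<in> U}"

definition M_dom :: "real \<Rightarrow> (real \<times> real) set \<Rightarrow> (real \<times> real \<times> real) set" where
  "M_dom r0 U = {(r, y, z). r0 < r \<and> (y, z) \<in> U}"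

definition pt :: "sfield \<Rightarrow> sfield" where
  "pt F = (\<lambda>t r y z. deriv (\<lambda>s. F s r y z) t)"
definition pr :: "sfield \<Rightarrow> sfield" where
  "pr F = (\<lambda>t r y z. deriv (\<lambda>s. F t s y z) r)"

definition mr :: "mfield \<Rightarrow> mfield" where
  "mr F = (\<lambda>r y z. deriv (\<lambda>s. F s y z) r)"
definition mS :: "nat \<Rightarrow> mfield \<Rightarrow> mfield" where  (* d^S, sphere directions A = 0,1 *)
  "mS A F = (\<lambda>r y z. if A = 0 then deriv (\<lambda>s. F r s z) y else deriv (\<lambda>s. F r y s) z)"
definition m3 :: "nat \<Rightarrow> mfield \<Rightarrow> mfield" where
  "m3 i F = (if i = 0 then mr F else mS (i - 1) F)"

definition det2 :: "(nat \<Rightarrow> nat \<Rightarrow> real) \<Rightarrow> real" where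
  "det2 G = G 0 0 * G 1 1 - G 0 1 * G 1 0"
definition inv2 :: "(nat \<Rightarrow> nat \<Rightarrow> real) \<Rightarrow> nat \<Rightarrow> nat \<Rightarrow> real" where
  "inv2 G A B = (if A = 0 \<and> B = 0 then G 1 1 else if A = 1 \<and> B = 1 then G 0 0 else - G A B) / det2 G"
definition tr2 :: "(nat \<Rightarrow> nat \<Rightarrow> real) \<Rightarrow> (nat \<Rightarrow> nat \<Rightarrow> real) \<Rightarrow> real" where
  "tr2 G X = (\<Sum>A<2. \<Sum>B<2. inv2 G A B * X A B)"
definition sqn2 :: "(nat \<Rightarrow> nat \<Rightarrow> real) \<Rightarrow> (nat \<Rightarrow> real) \<Rightarrow> real" where
  "sqn2 G w = (\<Sum>A<2. \<Sum>B<2. inv2 G A B * w A * w B)"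
definition raise2 :: "(nat \<Rightarrow> nat \<Rightarrow> real) \<Rightarrow> (nat \<Rightarrow> real) \<Rightarrow> nat \<Rightarrow> real" where
  "raise2 G w A = (\<Sum>B<2. inv2 G A B * w B)"
definition posdef2 :: "(nat \<Rightarrow> nat \<Rightarrow> real) \<Rightarrow> bool" where
  "posdef2 G = (\<forall>v::nat \<Rightarrow> real. (v 0 \<noteq> 0 \<or> v 1 \<noteq> 0) \<longrightarrow> (\<Sum>A<2. \<Sum>B<2. G A B * v A * v B) > 0)"
definition posdef3 :: "(nat \<Rightarrow> nat \<Rightarrow> real) \<Rightarrow> bool" where
  "posdef3 G = (\<forall>v::nat \<Rightarrow> real. (\<exists>i<3. v i \<noteq> 0) \<longrightarrow> (\<Sum>i<3. \<Sum>j<3. G i j * v i * v j) > 0)"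

definition alpha :: "sfield \<Rightarrow> (nat \<Rightarrow> sfield) \<Rightarrow> (nat \<Rightarrow> nat \<Rightarrow> sfield) \<Rightarrow> sfield" where
  "alpha Nn bT gam = (\<lambda>t r y z. (Nn t r y z)^2 - sqn2 (\<lambda>A B. gam A B t r y z) (\<lambda>A. bT A t r y z))"

definition atf :: "mfield \<Rightarrow> sfield \<Rightarrow> mfield" where
  "atf f F = (\<lambda>r y z. F (f r y z) r y z)"

definition betafT :: "sfield \<Rightarrow> (nat \<Rightarrow> sfield) \<Rightarrow> (nat \<Rightarrow> nat \<Rightarrow> sfield) \<Rightarrow> mfield \<Rightarrow> nat \<Rightarrow> mfield" where
  "betafT Nn bT gam f A = (\<lambda>r y z. atf f (bT A) r y z - atf f (alpha Nn bT gam) r y z * mS A f r y z)"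

definition gamf :: "sfield \<Rightarrow> (nat \<Rightarrow> sfield) \<Rightarrow> (nat \<Rightarrow> nat \<Rightarrow> sfield) \<Rightarrow> mfield \<Rightarrow> nat \<Rightarrow> nat \<Rightarrow> mfield" where
  "gamf Nn bT gam f A B = (\<lambda>r y z. atf f (gam A B) r y z
      + atf f (bT A) r y z * mS B f r y z + atf f (bT B) r y z * mS A f r y z
      - atf f (alpha Nn bT gam) r y z * mS A f r y z * mS B f r y z)"

definition gamfp :: "sfield \<Rightarrow> (nat \<Rightarrow> sfield) \<Rightarrow> (nat \<Rightarrow> nat \<Rightarrow> sfield) \<Rightarrow> mfield \<Rightarrow> real \<Rightarrow> real \<Rightarrow> real \<Rightarrow> nat \<Rightarrow> nat \<Rightarrow> real" where
  "gamfp Nn bT gam f r y z = (\<lambda>A B. gamf Nn bT gam f A B r y z)"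

definition lamf2 :: "sfield \<Rightarrow> sfield \<Rightarrow> (nat \<Rightarrow> sfield) \<Rightarrow> (nat \<Rightarrow> nat \<Rightarrow> sfield) \<Rightarrow> mfield \<Rightarrow> mfield" where
  "lamf2 Nn lam bT gam f = (\<lambda>r y z. (atf f lam r y z)^2
      - (atf f (alpha Nn bT gam) r y z + sqn2 (gamfp Nn bT gam f r y z) (\<lambda>A. betafT Nn bT gam f A r y z))
        * (mr f r y z)^2)"

definition lamf :: "sfield \<Rightarrow> sfield \<Rightarrow> (nat \<Rightarrow> sfield) \<Rightarrow> (nat \<Rightarrow> nat \<Rightarrow> sfield) \<Rightarrow> mfield \<Rightarrow> mfield" where
  "lamf Nn lam bT gam f = (\<lambda>r y z. sqrt (lamf2 Nn lam bT gam f r y z))"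

definition bf :: "sfield \<Rightarrow> (nat \<Rightarrow> sfield) \<Rightarrow> (nat \<Rightarrow> nat \<Rightarrow> sfield) \<Rightarrow> mfield \<Rightarrow> nat \<Rightarrow> mfield" where
  "bf Nn bT gam f A = (\<lambda>r y z. mr f r y z * betafT Nn bT gam f A r y z)"

text \<open>The induced metric g_f on M_f in coordinates (r,y,z).\<close>
definition gf :: "sfield \<Rightarrow> sfield \<Rightarrow> (nat \<Rightarrow> sfield) \<Rightarrow> (nat \<Rightarrow> nat \<Rightarrow> sfield) \<Rightarrow> mfield \<Rightarrow> nat \<Rightarrow> nat \<Rightarrow> mfield" where
  "gf Nn lam bT gam f i j = (\<lambda>r y z.
     if i = 0 \<and> j = 0 then lamf2 Nn lam bT gam f r y z
                         + sqn2 (gamfp Nn bT gam f r y z) (\<lambda>A. bf Nn bT gam f A r y z)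
     else if i = 0 then bf Nn bT gam f (j - 1) r y z
     else if j = 0 then bf Nn bT gam f (i - 1) r y z
     else gamf Nn bT gam f (i - 1) (j - 1) r y z)"

text \<open>Unit normal n_f = lamf^-1 (d_r - b_f^sharp), components w.r.t. (d_r, d_y, d_z).\<close>
definition nf :: "sfield \<Rightarrow> sfield \<Rightarrow> (nat \<Rightarrow> sfield) \<Rightarrow> (nat \<Rightarrow> nat \<Rightarrow> sfield) \<Rightarrow> mfield \<Rightarrow> nat \<Rightarrow> mfield" where
  "nf Nn lam bT gam f i = (\<lambda>r y z.
     if i = 0 then 1 / lamf Nn lam bT gam f r y z
     else - raise2 (gamfp Nn bT gam f r y z) (\<lambda>A. bf Nn bT gam f A r y z) (i - 1)
          / lamf Nn lam bT gam f r y z)"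

text \<open>Christoffel symbols of the first kind of a 3-metric G in coordinates (r,y,z):
 Chr3 G k i j = g(nabla_i d_j, d_k).\<close>
definition Chr3 :: "(nat \<Rightarrow> nat \<Rightarrow> mfield) \<Rightarrow> nat \<Rightarrow> nat \<Rightarrow> nat \<Rightarrow> mfield" where
  "Chr3 G k i j = (\<lambda>r y z. (m3 i (G j k) r y z + m3 j (G i k) r y z - m3 k (G i j) r y z) / 2)"

text \<open>Second fundamental form of S_r in (M_f, g_f) w.r.t. n_f: II(d_A, d_B) = g_f(nabla_{d_A} n_f, d_B).\<close>
definition IIf :: "sfield \<Rightarrow> sfield \<Rightarrow> (nat \<Rightarrow> sfield) \<Rightarrow> (nat \<Rightarrow> nat \<Rightarrow> sfield) \<Rightarrow> mfield \<Rightarrow> nat \<Rightarrow> nat \<Rightarrow> mfield" where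
  "IIf Nn lam bT gam f A B = (\<lambda>r y z.
     (\<Sum>k<3. gf Nn lam bT gam f k (B + 1) r y z * m3 (A + 1) (nf Nn lam bT gam f k) r y z)
   + (\<Sum>j<3. Chr3 (gf Nn lam bT gam f) (B + 1) (A + 1) j r y z * nf Nn lam bT gam f j r y z))"

definition Hf :: "sfield \<Rightarrow> sfield \<Rightarrow> (nat \<Rightarrow> sfield) \<Rightarrow> (nat \<Rightarrow> nat \<Rightarrow> sfield) \<Rightarrow> mfield \<Rightarrow> mfield" where
  "Hf Nn lam bT gam f = (\<lambda>r y z. tr2 (gamfp Nn bT gam f r y z) (\<lambda>A B. IIf Nn lam bT gam f A B r y z))"

definition Chr2 :: "(nat \<Rightarrow> nat \<Rightarrow> mfield) \<Rightarrow> nat \<Rightarrow> nat \<Rightarrow> nat \<Rightarrow> mfield" where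
  "Chr2 G D A B = (\<lambda>r y z. (mS A (G B D) r y z + mS B (G A D) r y z - mS D (G A B) r y z) / 2)"

definition div2 :: "(nat \<Rightarrow> nat \<Rightarrow> mfield) \<Rightarrow> (nat \<Rightarrow> mfield) \<Rightarrow> mfield" where
  "div2 G w = (\<lambda>r y z. let Gp = (\<lambda>A B. G A B r y z) in
     \<Sum>A<2. \<Sum>B<2. inv2 Gp A B *
       (mS A (w B) r y z - (\<Sum>C<2. \<Sum>D<2. inv2 Gp C D * Chr2 G D A B r y z * w C r y z)))"

text \<open>Q_r(omega), Q_t(omega) evaluated at t = f, for omega given by its components at the point.\<close>
definition Qr :: "sfield \<Rightarrow> (nat \<Rightarrow> sfield) \<Rightarrow> (nat \<Rightarrow> nat \<Rightarrow> sfield) \<Rightarrow> mfield \<Rightarrow> real \<Rightarrow> real \<Rightarrow> real \<Rightarrow> (nat \<Rightarrow> real) \<Rightarrow> nat \<Rightarrow> nat \<Rightarrow> real" where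
  "Qr Nn bT gam f r y z w A B = atf f (pr (gam A B)) r y z
      + atf f (pr (bT A)) r y z * w B + atf f (pr (bT B)) r y z * w A
      - atf f (pr (alpha Nn bT gam)) r y z * w A * w B"

definition Qt :: "sfield \<Rightarrow> (nat \<Rightarrow> sfield) \<Rightarrow> (nat \<Rightarrow> nat \<Rightarrow> sfield) \<Rightarrow> mfield \<Rightarrow> real \<Rightarrow> real \<Rightarrow> real \<Rightarrow> (nat \<Rightarrow> real) \<Rightarrow> nat \<Rightarrow> nat \<Rightarrow> real" where
  "Qt Nn bT gam f r y z w A B = atf f (pt (gam A B)) r y z
      + atf f (pt (bT A)) r y z * w B + atf f (pt (bT B)) r y z * w A
      - atf f (pt (alpha Nn bT gam)) r y z * w A * w B"

definition dSf :: "mfield \<Rightarrow> real \<Rightarrow> real \<Rightarrow> real \<Rightarrow> nat \<Rightarrow> real" where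
  "dSf f r y z = (\<lambda>A. mS A f r y z)"

text \<open>partial_t gamma_f: t-derivative at fixed f of gamma + 2 beta^T (.) d^S f - alpha (d^S f)^2, at t = f.\<close>
definition dtgamf :: "sfield \<Rightarrow> (nat \<Rightarrow> sfield) \<Rightarrow> (nat \<Rightarrow> nat \<Rightarrow> sfield) \<Rightarrow> mfield \<Rightarrow> nat \<Rightarrow> nat \<Rightarrow> mfield" where
  "dtgamf Nn bT gam f A B = (\<lambda>r y z. deriv (\<lambda>s. gam A B s r y z
      + bT A s r y z * mS B f r y z + bT B s r y z * mS A f r y z
      - alpha Nn bT gam s r y z * mS A f r y z * mS B f r y z) (f r y z))"

text \<open>beta_f(n_f), with beta_f = beta - alpha df and beta = beta^T (beta_r = 0).\<close>
definition betaf_n :: "sfield \<Rightarrow> sfield \<Rightarrow> (nat \<Rightarrow> sfield) \<Rightarrow> (nat \<Rightarrow> nat \<Rightarrow> sfield) \<Rightarrow> mfield \<Rightarrow> mfield" where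
  "betaf_n Nn lam bT gam f = (\<lambda>r y z.
      (- atf f (alpha Nn bT gam) r y z * mr f r y z) * nf Nn lam bT gam f 0 r y z
    + (\<Sum>A<2. betafT Nn bT gam f A r y z * nf Nn lam bT gam f (A + 1) r y z))"

definition TMCF_at :: "sfield \<Rightarrow> sfield \<Rightarrow> (nat \<Rightarrow> sfield) \<Rightarrow> (nat \<Rightarrow> nat \<Rightarrow> sfield) \<Rightarrow> mfield \<Rightarrow> real \<Rightarrow> real \<Rightarrow> real \<Rightarrow> bool" where
  "TMCF_at Nn lam bT gam f r y z =
     (div2 (gamf Nn bT gam f) (betafT Nn bT gam f) r y z
      + Hf Nn lam bT gam f r y z * betaf_n Nn lam bT gam f r y z
      - tr2 (gamfp Nn bT gam f r y z) (\<lambda>A B. dtgamf Nn bT gam f A B r y z) / 2 = 0)"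

end

theory Submission
  imports Defs
begin

text \<open>
  Since \<open>g\<^sub>f(n\<^sub>f, \<partial>\<^sub>B) = 0\<close> on all of \<open>M\<^sub>f\<close>, differentiating along \<open>\<partial>\<^sub>A\<close> gives
  \<open>II\<^sub>A\<^sub>B = - \<Gamma>\<^sub>j\<^sub>A\<^sub>B n\<^sub>f\<^sup>j\<close>: the second fundamental form of \<open>S\<^sub>r\<close> only involves the
  Christoffel symbols of \<open>g\<^sub>f\<close>. Inserting \<open>n\<^sub>f = \<lambda>\<^sub>f\<^sup>-\<^sup>1 (\<partial>\<^sub>r - b\<^sub>f\<^sup>\<sharp>)\<close> and
  \<open>b\<^sub>f = \<partial>\<^sub>rf \<beta>\<^sub>f\<^sup>T\<close>, the chain rule along the graph together with the symmetry of the
  second derivatives of \<open>f\<close> gives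
  \<open>\<partial>\<^sub>r\<gamma>\<^sub>f = Q\<^sub>r(d\<^sup>Sf) + \<partial>\<^sub>rf Q\<^sub>t(d\<^sup>Sf) + 2 \<beta>\<^sub>f\<^sup>T \<odot> d\<^sup>S\<partial>\<^sub>rf\<close>, whose last term cancels the
  derivative of \<open>\<partial>\<^sub>rf\<close> in \<open>d\<^sup>Sb\<^sub>f\<close>. What remains is
  \<open>2 \<lambda>\<^sub>f II\<^sub>A\<^sub>B = Q\<^sub>r + \<partial>\<^sub>rf Q\<^sub>t - \<partial>\<^sub>rf (\<nabla>\<^sub>A\<beta>\<^sub>B + \<nabla>\<^sub>B\<beta>\<^sub>A)\<close>, and its trace is the first
  formula. Under the TMCF equation, \<open>\<partial>\<^sub>t\<gamma>\<^sub>f = Q\<^sub>t(d\<^sup>Sf)\<close> and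
  \<open>\<beta>\<^sub>f(n\<^sub>f) = - \<partial>\<^sub>rf (\<alpha> + |\<beta>\<^sub>f\<^sup>T|\<^sup>2) / \<lambda>\<^sub>f\<close> eliminate the divergence, and
  \<open>\<lambda>\<^sup>2 = \<lambda>\<^sub>f\<^sup>2 + (\<alpha> + |\<beta>\<^sub>f\<^sup>T|\<^sup>2) (\<partial>\<^sub>rf)\<^sup>2\<close> turns the result into the second formula.
\<close>

lemma has_real_derivative_compose_curve:
  fixes g :: "'a::real_normed_vector \<Rightarrow> real"
  assumes c: "(c has_vector_derivative v) (at s)" and g: "(g has_derivative D) (at (c s))"
  shows "((\<lambda>s. g (c s)) has_real_derivative D v) (at s)"
proof -
  have "((\<lambda>s. g (c s)) has_derivative (\<lambda>h. D (h *\<^sub>R v))) (at s)"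
    using diff_chain_at[OF c[unfolded has_vector_derivative_def] g] by (simp add: o_def)
  moreover have "(\<lambda>h. D (h *\<^sub>R v)) = (\<lambda>h. D v * h)"
    using linear_scale[OF has_derivative_linear[OF g]] by (simp add: fun_eq_iff)
  ultimately show ?thesis by (simp add: has_field_derivative_def)
qed

lemma unc3_apply [simp]: "unc3 F (r, y, z) = F r y z"
  by (simp add: unc3_def)

lemma unc3_eq: "unc3 F = (\<lambda>x. F (fst x) (fst (snd x)) (snd (snd x)))"
  by (simp add: unc3_def fun_eq_iff split_beta)

lemma unc3_binop: "unc3 (\<lambda>r y z. h (F r y z) (G r y z)) = (\<lambda>x. h (unc3 F x) (unc3 G x))"
  by (simp add: unc3_eq)

definition coord_line :: "nat \<Rightarrow> real \<Rightarrow> real \<Rightarrow> real \<Rightarrow> real \<Rightarrow> real \<times> real \<times> real" where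
  "coord_line i r y z s = (if i = 0 then (s, y, z) else if i = 1 then (r, s, z) else (r, y, s))"

definition coord :: "nat \<Rightarrow> real \<Rightarrow> real \<Rightarrow> real \<Rightarrow> real" where
  "coord i r y z = (if i = 0 then r else if i = 1 then y else z)"

definition coord_basis :: "nat \<Rightarrow> real \<times> real \<times> real" where
  "coord_basis i = coord_line i 0 0 0 1"

definition differentiable3 :: "mfield \<Rightarrow> real \<Rightarrow> real \<Rightarrow> real \<Rightarrow> bool" where
  "differentiable3 F r y z \<longleftrightarrow> unc3 F differentiable at (r, y, z)"

lemma coord_line_coord [simp]: "coord_line i r y z (coord i r y z) = (r, y, z)"
  by (simp add: coord_line_def coord_def)

lemma coord_basis_in_Basis: "i < 3 \<Longrightarrow> coord_basis i \<in> Basis"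
  by (auto simp: coord_basis_def coord_line_def Basis_prod_def zero_prod_def
      numeral_3_eq_3 less_Suc_eq)

lemma has_vector_derivative_coord_line:
  "(coord_line i r y z has_vector_derivative coord_basis i) (at s)"
  unfolding coord_line_def coord_basis_def
  by (auto intro!: derivative_eq_intros simp: has_vector_derivative_def zero_prod_def)

lemma m3_eq_deriv_coord_line:
  "i < 3 \<Longrightarrow> m3 i F r y z = deriv (\<lambda>s. unc3 F (coord_line i r y z s)) (coord i r y z)"
  by (auto simp: m3_def mr_def mS_def coord_line_def coord_def unc3_def)

lemma m3_has_real_derivative:
  assumes "differentiable3 F r y z" "i < 3"
  shows "((\<lambda>s. unc3 F (coord_line i r y z s)) has_real_derivative m3 i F r y z) (at (coord i r y z))"
proof -
  obtain D where "(unc3 F has_derivative D) (at (r, y, z))"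
    using assms(1) unfolding differentiable3_def differentiable_def by blast
  then have "((\<lambda>s. unc3 F (coord_line i r y z s)) has_real_derivative D (coord_basis i)) (at (coord i r y z))"
    by (intro has_real_derivative_compose_curve has_vector_derivative_coord_line) simp
  then show ?thesis
    using DERIV_imp_deriv m3_eq_deriv_coord_line[OF assms(2)] by metis
qed

lemma partials_has_real_derivative:
  assumes "differentiable3 F r y z"
  shows "((\<lambda>s. F s y z) has_real_derivative mr F r y z) (at r)"
    and "((\<lambda>s. F r s z) has_real_derivative mS 0 F r y z) (at y)"
    and "((\<lambda>s. F r y s) has_real_derivative mS 1 F r y z) (at z)"
  using m3_has_real_derivative[OF assms, of 0] m3_has_real_derivative[OF assms, of 1]
    m3_has_real_derivative[OF assms, of 2]
  by (simp_all add: coord_line_def coord_def unc3_def m3_def)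

lemma m3_eq_frechet_derivative:
  assumes "differentiable3 F r y z" "i < 3"
  shows "m3 i F r y z = frechet_derivative (unc3 F) (at (r, y, z)) (coord_basis i)"
proof -
  have "(unc3 F has_derivative frechet_derivative (unc3 F) (at (r, y, z))) (at (r, y, z))"
    using assms(1) frechet_derivative_works unfolding differentiable3_def by blast
  then have "((\<lambda>s. unc3 F (coord_line i r y z s)) has_real_derivative
      frechet_derivative (unc3 F) (at (r, y, z)) (coord_basis i)) (at (coord i r y z))"
    by (intro has_real_derivative_compose_curve has_vector_derivative_coord_line) simp
  then show ?thesis using DERIV_unique m3_has_real_derivative[OF assms] by blast
qed

lemma m3_eq_0_if_locally_0:
  assumes "open S" "(r, y, z) \<in> S" "\<And>x. x \<in> S \<Longrightarrow> unc3 H x = 0" "i < 3"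
  shows "m3 i H r y z = 0"
proof -
  have "continuous_on UNIV (coord_line i r y z)"
    by (cases "i = 0"; cases "i = 1") (auto simp: coord_line_def intro!: continuous_intros)
  then have "open (coord_line i r y z -` S)"
    using assms(1) open_vimage by blast
  moreover have "coord i r y z \<in> coord_line i r y z -` S"
    using assms(2) by simp
  ultimately have "\<forall>\<^sub>F s in nhds (coord i r y z). unc3 H (coord_line i r y z s) = 0"
    using assms(3) eventually_nhds by blast
  then have "m3 i H r y z = deriv (\<lambda>s. 0) (coord i r y z)"
    unfolding m3_eq_deriv_coord_line[OF assms(4)] by (rule deriv_cong_ev) simp
  then show ?thesis by simp
qed

lemma differentiable3_const: "differentiable3 (\<lambda>r y z. c) r y z"
  by (simp add: differentiable3_def unc3_eq)

lemma differentiable3_add: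
  "differentiable3 F r y z \<Longrightarrow> differentiable3 G r y z \<Longrightarrow> differentiable3 (\<lambda>r y z. F r y z + G r y z) r y z"
  unfolding differentiable3_def unc3_eq by (rule differentiable_add)

lemma differentiable3_diff:
  "differentiable3 F r y z \<Longrightarrow> differentiable3 G r y z \<Longrightarrow> differentiable3 (\<lambda>r y z. F r y z - G r y z) r y z"
  unfolding differentiable3_def unc3_eq by (rule differentiable_diff)

lemma differentiable3_mult:
  "differentiable3 F r y z \<Longrightarrow> differentiable3 G r y z \<Longrightarrow> differentiable3 (\<lambda>r y z. F r y z * G r y z) r y z"
  unfolding differentiable3_def unc3_eq by (rule differentiable_mult)

lemma differentiable3_minus:
  "differentiable3 F r y z \<Longrightarrow> differentiable3 (\<lambda>r y z. - F r y z) r y z"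
  unfolding differentiable3_def unc3_eq by (rule differentiable_minus)

lemma differentiable3_power:
  "differentiable3 F r y z \<Longrightarrow> differentiable3 (\<lambda>r y z. F r y z ^ n) r y z"
  unfolding differentiable3_def unc3_eq by (rule differentiable_power)

lemma differentiable3_divide:
  "differentiable3 F r y z \<Longrightarrow> differentiable3 G r y z \<Longrightarrow> G r y z \<noteq> 0 \<Longrightarrow>
    differentiable3 (\<lambda>r y z. F r y z / G r y z) r y z"
  unfolding differentiable3_def unc3_eq by (rule differentiable_divide) auto

lemma differentiable3_sqrt:
  assumes "differentiable3 F r y z" "F r y z > 0"
  shows "differentiable3 (\<lambda>r y z. sqrt (F r y z)) r y z"
proof -
  have "sqrt differentiable at (F r y z)"
    using DERIV_real_sqrt[OF assms(2)] real_differentiable_def by blast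
  with assms(1) show ?thesis
    unfolding differentiable3_def unc3_eq using differentiable_chain_at[unfolded o_def] by force
qed

lemma m3_eqI:
  "((\<lambda>s. unc3 F (coord_line i r y z s)) has_real_derivative D) (at (coord i r y z)) \<Longrightarrow> i < 3 \<Longrightarrow>
    m3 i F r y z = D"
  by (simp add: m3_eq_deriv_coord_line DERIV_imp_deriv)

lemma m3_add:
  assumes "differentiable3 F r y z" "differentiable3 G r y z" "i < 3"
  shows "m3 i (\<lambda>r y z. F r y z + G r y z) r y z = m3 i F r y z + m3 i G r y z"
  using DERIV_add[OF m3_has_real_derivative[OF assms(1,3)] m3_has_real_derivative[OF assms(2,3)]]
  by (intro m3_eqI assms(3)) (simp add: unc3_binop[of "(+)"])

lemma m3_diff:
  assumes "differentiable3 F r y z" "differentiable3 G r y z" "i < 3"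
  shows "m3 i (\<lambda>r y z. F r y z - G r y z) r y z = m3 i F r y z - m3 i G r y z"
  using DERIV_diff[OF m3_has_real_derivative[OF assms(1,3)] m3_has_real_derivative[OF assms(2,3)]]
  by (intro m3_eqI assms(3)) (simp add: unc3_binop[of "(-)"])

lemma m3_mult:
  assumes "differentiable3 F r y z" "differentiable3 G r y z" "i < 3"
  shows "m3 i (\<lambda>r y z. F r y z * G r y z) r y z = m3 i F r y z * G r y z + F r y z * m3 i G r y z"
  using DERIV_mult[OF m3_has_real_derivative[OF assms(1,3)] m3_has_real_derivative[OF assms(2,3)]]
  by (intro m3_eqI assms(3)) (simp add: unc3_binop[of "(*)"] mult.commute)

lemma m3_sum:
  assumes "finite K" "\<And>k. k \<in> K \<Longrightarrow> differentiable3 (F k) r y z" "i < 3"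
  shows "m3 i (\<lambda>r y z. \<Sum>k\<in>K. F k r y z) r y z = (\<Sum>k\<in>K. m3 i (F k) r y z)"
  using DERIV_sum[OF m3_has_real_derivative[OF assms(2,3)], of K]
  by (intro m3_eqI assms(3)) (simp add: unc3_eq)

section \<open>Symmetry of second derivatives\<close>

lemma dist_Pair_le_abs: "dist (x, y) (a, b) \<le> \<bar>x - a\<bar> + \<bar>y - b\<bar>" for x y a b :: real
  using sqrt_sum_squares_le_sum_abs[of "x - a" "y - b"] by (simp add: dist_Pair_Pair dist_real_def)

lemma mixed_partials_commute:
  fixes g gx gy gxy gyx :: "real \<Rightarrow> real \<Rightarrow> real"
  assumes S: "open S" "(a, b) \<in> S"
    and gx: "\<And>x y. (x, y) \<in> S \<Longrightarrow> ((\<lambda>x. g x y) has_real_derivative gx x y) (at x)"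
    and gy: "\<And>x y. (x, y) \<in> S \<Longrightarrow> ((\<lambda>y. g x y) has_real_derivative gy x y) (at y)"
    and gxy: "\<And>x y. (x, y) \<in> S \<Longrightarrow> ((\<lambda>y. gx x y) has_real_derivative gxy x y) (at y)"
    and gyx: "\<And>x y. (x, y) \<in> S \<Longrightarrow> ((\<lambda>x. gy x y) has_real_derivative gyx x y) (at x)"
    and cont_gxy: "isCont (\<lambda>(x, y). gxy x y) (a, b)" and cont_gyx: "isCont (\<lambda>(x, y). gyx x y) (a, b)"
  shows "gxy a b = gyx a b"
proof (rule ccontr)
  assume "gxy a b \<noteq> gyx a b"
  define e where "e = \<bar>gxy a b - gyx a b\<bar> / 2"
  have "e > 0" using \<open>gxy a b \<noteq> gyx a b\<close> by (simp add: e_def)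
  obtain d0 where "d0 > 0" and d0: "ball (a, b) d0 \<subseteq> S"
    using S open_contains_ball by blast
  obtain d1 where "d1 > 0" and d1: "\<And>p. dist p (a, b) < d1 \<Longrightarrow> \<bar>(\<lambda>(x, y). gxy x y) p - gxy a b\<bar> < e"
    using cont_gxy \<open>e > 0\<close> unfolding continuous_at_eps_delta dist_real_def by fastforce
  obtain d2 where "d2 > 0" and d2: "\<And>p. dist p (a, b) < d2 \<Longrightarrow> \<bar>(\<lambda>(x, y). gyx x y) p - gyx a b\<bar> < e"
    using cont_gyx \<open>e > 0\<close> unfolding continuous_at_eps_delta dist_real_def by fastforce
  define h where "h = min d0 (min d1 d2) / 3"
  have "h > 0" "3 * h \<le> d0" "3 * h \<le> d1" "3 * h \<le> d2"
    using \<open>d0 > 0\<close> \<open>d1 > 0\<close> \<open>d2 > 0\<close> by (auto simp: h_def)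
  have near: "dist (x, y) (a, b) < 3 * h"
    if "a \<le> x" "x \<le> a + h" "b \<le> y" "y \<le> b + h" for x y
    using dist_Pair_le_abs[of x y a b] that \<open>h > 0\<close> by simp
  have inS: "(x, y) \<in> S" if "a \<le> x" "x \<le> a + h" "b \<le> y" "y \<le> b + h" for x y
    using near[OF that] \<open>3 * h \<le> d0\<close> d0 by (auto simp: dist_commute)
  \<comment> \<open>the second difference of g over the square of side h, computed in either order\<close>
  have "\<exists>\<xi>>a. \<xi> < a + h \<and> (g (a + h) (b + h) - g (a + h) b) - (g a (b + h) - g a b)
      = (a + h - a) * (gx \<xi> (b + h) - gx \<xi> b)"
    by (rule MVT2[where f = "\<lambda>x. g x (b + h) - g x b"]) (use \<open>h > 0\<close> inS in \<open>auto intro!: DERIV_diff gx\<close>)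
  then obtain \<xi> where \<xi>: "a < \<xi>" "\<xi> < a + h"
    "(g (a + h) (b + h) - g (a + h) b) - (g a (b + h) - g a b) = h * (gx \<xi> (b + h) - gx \<xi> b)"
    by auto
  have "\<exists>\<eta>>b. \<eta> < b + h \<and> gx \<xi> (b + h) - gx \<xi> b = (b + h - b) * gxy \<xi> \<eta>"
    by (rule MVT2[where f = "gx \<xi>"]) (use \<open>h > 0\<close> \<xi> inS in \<open>auto intro!: gxy\<close>)
  then obtain \<eta> where \<eta>: "b < \<eta>" "\<eta> < b + h" "gx \<xi> (b + h) - gx \<xi> b = h * gxy \<xi> \<eta>"
    by auto
  have "\<exists>\<eta>'>b. \<eta>' < b + h \<and> (g (a + h) (b + h) - g a (b + h)) - (g (a + h) b - g a b)
      = (b + h - b) * (gy (a + h) \<eta>' - gy a \<eta>')"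
    by (rule MVT2[where f = "\<lambda>y. g (a + h) y - g a y"]) (use \<open>h > 0\<close> inS in \<open>auto intro!: DERIV_diff gy\<close>)
  then obtain \<eta>' where \<eta>': "b < \<eta>'" "\<eta>' < b + h"
    "(g (a + h) (b + h) - g a (b + h)) - (g (a + h) b - g a b) = h * (gy (a + h) \<eta>' - gy a \<eta>')"
    by auto
  have "\<exists>\<xi>'>a. \<xi>' < a + h \<and> gy (a + h) \<eta>' - gy a \<eta>' = (a + h - a) * gyx \<xi>' \<eta>'"
    by (rule MVT2[where f = "\<lambda>x. gy x \<eta>'"]) (use \<open>h > 0\<close> \<eta>' inS in \<open>auto intro!: gyx\<close>)
  then obtain \<xi>' where \<xi>': "a < \<xi>'" "\<xi>' < a + h" "gy (a + h) \<eta>' - gy a \<eta>' = h * gyx \<xi>' \<eta>'"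
    by auto
  have "h * (h * gxy \<xi> \<eta>) = h * (h * gyx \<xi>' \<eta>')"
    using \<xi>(3) \<eta>(3) \<eta>'(3) \<xi>'(3) by (simp add: algebra_simps)
  then have "gxy \<xi> \<eta> = gyx \<xi>' \<eta>'" using \<open>h > 0\<close> by simp
  moreover have "\<bar>gxy \<xi> \<eta> - gxy a b\<bar> < e" using d1 near[of \<xi> \<eta>] \<open>3 * h \<le> d1\<close> \<xi> \<eta> by fastforce
  moreover have "\<bar>gyx \<xi>' \<eta>' - gyx a b\<bar> < e" using d2 near[of \<xi>' \<eta>'] \<open>3 * h \<le> d2\<close> \<xi>' \<eta>' by fastforce
  ultimately show False unfolding e_def by (simp add: abs_if split: if_splits)
qed

lemma differentiable_on_cong:
  assumes "\<And>x. x \<in> S \<Longrightarrow> g x = f x" and "f differentiable_on S"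
  shows "g differentiable_on S"
  unfolding differentiable_on_def differentiable_def
proof
  fix x assume "x \<in> S"
  then obtain D where "(f has_derivative D) (at x within S)"
    using assms(2) unfolding differentiable_on_def differentiable_def by blast
  then have "(g has_derivative D) (at x within S)"
    using has_derivative_transform[where f = f and g = g, OF \<open>x \<in> S\<close>] assms(1) by blast
  then show "\<exists>D. (g has_derivative D) (at x within S)" by blast
qed

lemma unc3_m3_eq_frechet_derivative:
  assumes "open S" "unc3 F differentiable_on S" "x \<in> S" "i < 3"
  shows "unc3 (m3 i F) x = frechet_derivative (unc3 F) (at x) (coord_basis i)"
proof -
  obtain r y z where x: "x = (r, y, z)" by (cases x) auto
  have "differentiable3 F r y z"
    using assms(1-3) differentiable_on_eq_differentiable_at by (auto simp: x differentiable3_def)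
  then show ?thesis using m3_eq_frechet_derivative[OF _ assms(4)] by (simp add: x)
qed

lemma
  fixes H :: mfield
  assumes "isCont (unc3 H) (r, y, z)"
  shows isCont_unc3_slice_ry: "isCont (\<lambda>(a, b). H a b z) (r, y)"
    and isCont_unc3_slice_rz: "isCont (\<lambda>(a, c). H a y c) (r, z)"
proof -
  have "isCont (\<lambda>p. unc3 H (fst p, snd p, z)) (r, y)"
    by (rule isCont_o2[where f = "\<lambda>p. (fst p, snd p, z)"]) (auto intro!: continuous_intros simp: assms)
  moreover have "isCont (\<lambda>p. unc3 H (fst p, y, snd p)) (r, z)"
    by (rule isCont_o2[where f = "\<lambda>p. (fst p, y, snd p)"]) (auto intro!: continuous_intros simp: assms)
  ultimately show "isCont (\<lambda>(a, b). H a b z) (r, y)" "isCont (\<lambda>(a, c). H a y c) (r, z)"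
    by (simp_all add: case_prod_unfold)
qed

lemma
  assumes "open (S :: (real \<times> real \<times> real) set)"
  shows open_slice_ry: "open {(a, b). (a, b, z) \<in> S}"
    and open_slice_rz: "open {(a, c). (a, y, c) \<in> S}"
proof -
  have "open ((\<lambda>p. (fst p, snd p, z)) -` S)" "open ((\<lambda>p. (fst p, y, snd p)) -` S)"
    using assms by (auto intro!: open_vimage continuous_intros)
  then show "open {(a, b). (a, b, z) \<in> S}" "open {(a, c). (a, y, c) \<in> S}"
    by (simp_all add: vimage_def case_prod_unfold)
qed

context
  fixes f :: mfield and S :: "(real \<times> real \<times> real) set"
  assumes S: "open S" and f: "Ck_on 2 (unc3 f) S"
begin

lemma Ck_on_2_differentiable_on: "unc3 f differentiable_on S"
  using f by (simp add: numeral_2_eq_2)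

lemma Ck_on_2_differentiable3: "(r, y, z) \<in> S \<Longrightarrow> differentiable3 f r y z"
  using Ck_on_2_differentiable_on S by (simp add: differentiable3_def differentiable_on_eq_differentiable_at)

lemma Ck_on_2_differentiable_on_m3:
  assumes "i < 3"
  shows "unc3 (m3 i f) differentiable_on S"
proof -
  have "(\<lambda>x. frechet_derivative (unc3 f) (at x) (coord_basis i)) differentiable_on S"
    using f coord_basis_in_Basis[OF assms] by (simp add: numeral_2_eq_2)
  then show ?thesis
    by (rule differentiable_on_cong[rotated]) (rule unc3_m3_eq_frechet_derivative[OF S Ck_on_2_differentiable_on _ assms])
qed

lemma Ck_on_2_differentiable3_m3: "(r, y, z) \<in> S \<Longrightarrow> i < 3 \<Longrightarrow> differentiable3 (m3 i f) r y z"
  using Ck_on_2_differentiable_on_m3 S by (simp add: differentiable3_def differentiable_on_eq_differentiable_at)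

lemma Ck_on_2_continuous_m3_m3:
  assumes "i < 3" "j < 3"
  shows "continuous_on S (unc3 (m3 j (m3 i f)))"
proof -
  define P where "P = (\<lambda>x. frechet_derivative (unc3 f) (at x) (coord_basis i))"
  have "continuous_on S (\<lambda>x. frechet_derivative P (at x) (coord_basis j))"
    using f coord_basis_in_Basis[OF assms(1)] coord_basis_in_Basis[OF assms(2)]
    by (simp add: P_def numeral_2_eq_2)
  moreover have "frechet_derivative P (at x) (coord_basis j) = unc3 (m3 j (m3 i f)) x" if "x \<in> S" for x
  proof -
    have "unc3 (m3 i f) differentiable at x"
      using Ck_on_2_differentiable_on_m3[OF assms(1)] S that differentiable_on_eq_differentiable_at by blast
    moreover have "unc3 (m3 i f) x' = P x'" if "x' \<in> S" for x'
      using unc3_m3_eq_frechet_derivative[OF S Ck_on_2_differentiable_on that assms(1)] by (simp add: P_def)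
    ultimately have "frechet_derivative (unc3 (m3 i f)) (at x) = frechet_derivative P (at x)"
      using frechet_derivative_transform_within_open[OF _ S \<open>x \<in> S\<close>] by blast
    then show ?thesis
      using unc3_m3_eq_frechet_derivative[OF S Ck_on_2_differentiable_on_m3[OF assms(1)] that assms(2)]
      by simp
  qed
  ultimately show ?thesis by (rule continuous_on_eq)
qed

lemma mS_mr_commute:
  assumes p: "(r, y, z) \<in> S" and A: "A < 2"
  shows "mS A (mr f) r y z = mr (mS A f) r y z"
proof -
  have d: "differentiable3 f a b c" "differentiable3 (mr f) a b c" "differentiable3 (mS A f) a b c"
    if "(a, b, c) \<in> S" for a b c
    using that A Ck_on_2_differentiable3 Ck_on_2_differentiable3_m3[of _ _ _ 0]
      Ck_on_2_differentiable3_m3[of _ _ _ "Suc A"] by (simp_all add: m3_def)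
  have "isCont (unc3 (mS A (mr f))) (r, y, z)" "isCont (unc3 (mr (mS A f))) (r, y, z)"
    using Ck_on_2_continuous_m3_m3[of 0 "Suc A"] Ck_on_2_continuous_m3_m3[of "Suc A" 0] A p S
    by (simp_all add: m3_def continuous_on_eq_continuous_at)
  note cont = this
  consider "A = 0" | "A = 1" using A by linarith
  then show ?thesis
  proof cases
    case 1
    show ?thesis unfolding 1
    proof (rule mixed_partials_commute[OF open_slice_ry[OF S], where g = "\<lambda>a b. f a b z"
          and gx = "\<lambda>a b. mr f a b z" and gy = "\<lambda>a b. mS 0 f a b z"
          and gxy = "\<lambda>a b. mS 0 (mr f) a b z" and gyx = "\<lambda>a b. mr (mS 0 f) a b z"])
      show "(r, y) \<in> {(a, b). (a, b, z) \<in> S}" using p by simp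
      show "isCont (\<lambda>(a, b). mS 0 (mr f) a b z) (r, y)" "isCont (\<lambda>(a, b). mr (mS 0 f) a b z) (r, y)"
        using cont[unfolded 1] by (auto intro: isCont_unc3_slice_ry)
    qed (use d[unfolded 1] in \<open>auto intro: partials_has_real_derivative\<close>)
  next
    case 2
    show ?thesis unfolding 2
    proof (rule mixed_partials_commute[OF open_slice_rz[OF S], where g = "\<lambda>a c. f a y c"
          and gx = "\<lambda>a c. mr f a y c" and gy = "\<lambda>a c. mS 1 f a y c"
          and gxy = "\<lambda>a c. mS 1 (mr f) a y c" and gyx = "\<lambda>a c. mr (mS 1 f) a y c"])
      show "(r, z) \<in> {(a, c). (a, y, c) \<in> S}" using p by simp
      show "isCont (\<lambda>(a, c). mS 1 (mr f) a y c) (r, z)" "isCont (\<lambda>(a, c). mr (mS 1 f) a y c) (r, z)"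
        using cont[unfolded 2] by (auto intro: isCont_unc3_slice_rz)
    qed (use d[unfolded 2] partials_has_real_derivative in \<open>auto simp: One_nat_def\<close>)
  qed
qed

end

section \<open>Restriction of spacetime fields to the graph\<close>

definition differentiable4 :: "sfield \<Rightarrow> real \<Rightarrow> real \<Rightarrow> real \<Rightarrow> real \<Rightarrow> bool" where
  "differentiable4 X t r y z \<longleftrightarrow> unc4 X differentiable at (t, r, y, z)"

lemma has_vector_derivative_t_line: "((\<lambda>s. (s, r, y, z)) has_vector_derivative (1, 0, 0, 0)) (at s)"
  by (auto intro!: derivative_eq_intros simp: has_vector_derivative_def zero_prod_def)

lemma has_vector_derivative_r_line: "((\<lambda>s. (t, s, y, z)) has_vector_derivative (0, 1, 0, 0)) (at s)"
  by (auto intro!: derivative_eq_intros simp: has_vector_derivative_def zero_prod_def)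

lemma
  assumes "(unc4 X has_derivative D) (at (t, r, y, z))"
  shows pt_eq_derivative: "pt X t r y z = D (1, 0, 0, 0)"
    and pr_eq_derivative: "pr X t r y z = D (0, 1, 0, 0)"
proof -
  have "((\<lambda>s. X s r y z) has_real_derivative D (1, 0, 0, 0)) (at t)"
    "((\<lambda>s. X t s y z) has_real_derivative D (0, 1, 0, 0)) (at r)"
    using has_real_derivative_compose_curve[OF has_vector_derivative_t_line, of "unc4 X"]
      has_real_derivative_compose_curve[OF has_vector_derivative_r_line, of "unc4 X"] assms
    by (simp_all add: unc4_def)
  then show "pt X t r y z = D (1, 0, 0, 0)" "pr X t r y z = D (0, 1, 0, 0)"
    by (simp_all add: pt_def pr_def DERIV_imp_deriv)
qed

lemma has_real_derivative_pt:
  assumes "differentiable4 X t r y z"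
  shows "((\<lambda>s. X s r y z) has_real_derivative pt X t r y z) (at t)"
proof -
  obtain D where D: "(unc4 X has_derivative D) (at (t, r, y, z))"
    using assms unfolding differentiable4_def differentiable_def by blast
  show ?thesis
    using has_real_derivative_compose_curve[OF has_vector_derivative_t_line D]
    by (simp add: unc4_def pt_eq_derivative[OF D])
qed

lemma differentiable3_atf:
  assumes "differentiable4 X (f r y z) r y z" "differentiable3 f r y z"
  shows "differentiable3 (atf f X) r y z"
proof -
  have "unc3 (atf f X) = unc4 X \<circ> (\<lambda>x. (unc3 f x, x))"
    by (auto simp: unc3_def unc4_def atf_def)
  moreover have "(\<lambda>x. (unc3 f x, x)) differentiable at (r, y, z)"
    using assms(2) unfolding differentiable3_def by (intro differentiable_Pair differentiable_ident)
  ultimately show ?thesis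
    using assms(1) differentiable_chain_at by (fastforce simp: differentiable3_def differentiable4_def)
qed

lemma mr_atf:
  assumes "differentiable4 X (f r y z) r y z" "differentiable3 f r y z"
  shows "mr (atf f X) r y z = pt X (f r y z) r y z * mr f r y z + pr X (f r y z) r y z"
proof -
  obtain D where D: "(unc4 X has_derivative D) (at (f r y z, r, y, z))"
    using assms(1) unfolding differentiable4_def differentiable_def by blast
  have "((\<lambda>s. (f s y z, s, y, z)) has_vector_derivative (mr f r y z, 1, 0, 0)) (at r)"
    using partials_has_real_derivative(1)[OF assms(2)]
    by (auto intro!: derivative_eq_intros simp: has_vector_derivative_def has_field_derivative_def
        zero_prod_def mult.commute)
  from has_real_derivative_compose_curve[OF this, of "unc4 X" D]
  have "((\<lambda>s. atf f X s y z) has_real_derivative D (mr f r y z, 1, 0, 0)) (at r)"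
    using D by (simp add: unc4_def atf_def)
  moreover have "D (mr f r y z, 1, 0, 0) = mr f r y z * D (1, 0, 0, 0) + D (0, 1, 0, 0)"
    using linear_add[OF has_derivative_linear[OF D], of "mr f r y z *\<^sub>R (1, 0, 0, 0)" "(0, 1, 0, 0)"]
      linear_scale[OF has_derivative_linear[OF D], of "mr f r y z" "(1, 0, 0, 0)"]
    by simp
  ultimately show ?thesis
    by (simp add: mr_def DERIV_imp_deriv pt_eq_derivative[OF D] pr_eq_derivative[OF D] mult.commute)
qed

lemma sum_lessThan_2: "(\<Sum>A<(2::nat). F A) = F 0 + F 1"
  by (simp add: numeral_2_eq_2)

lemma sum_lessThan_3: "(\<Sum>i<(3::nat). F i) = F 0 + F 1 + F 2"
  by (simp add: numeral_3_eq_3 numeral_2_eq_2)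

lemma det2_pos_if_posdef2:
  assumes sym: "G 0 1 = G 1 0" and pd: "posdef2 G"
  shows "det2 G > 0"
proof -
  have "G 0 0 > 0"
    using pd[unfolded posdef2_def, rule_format, of "\<lambda>k. if k = 0 then 1 else 0"]
    by (simp add: sum_lessThan_2)
  moreover have "G 0 0 * det2 G > 0"
    using pd[unfolded posdef2_def, rule_format, of "\<lambda>k. if k = 0 then - G 0 1 else G 0 0"]
      \<open>G 0 0 > 0\<close> sym
    by (simp add: sum_lessThan_2 det2_def algebra_simps power2_eq_square)
  ultimately show ?thesis by (simp add: zero_less_mult_iff)
qed

lemma inv2_sym: "G 0 1 = G 1 0 \<Longrightarrow> inv2 G 0 1 = inv2 G 1 0"
  by (simp add: inv2_def)

lemma inv2_right_inverse:
  assumes sym: "G 0 1 = G 1 0" and det: "det2 G \<noteq> 0" and "C < 2" "B < 2"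
  shows "G C 0 * inv2 G 0 B + G C 1 * inv2 G 1 B = (if C = B then 1 else 0)"
proof -
  define k where "k = 1 / det2 G"
  have k: "k * (G 0 0 * G 1 1 - G 1 0 * G 1 0) = 1" using det sym by (simp add: k_def det2_def)
  have inv: "inv2 G A D = (if A = 0 \<and> D = 0 then G 1 1 else if A = 1 \<and> D = 1 then G 0 0 else - G A D) * k"
    for A D
    by (simp add: inv2_def k_def)
  have "C = 0 \<or> C = 1" "B = 0 \<or> B = 1" using assms(3,4) by auto
  then show ?thesis unfolding inv using k sym by (auto simp: algebra_simps)
qed

lemma lower_raise2:
  assumes sym: "G 0 1 = G 1 0" and det: "det2 G \<noteq> 0" and C: "C < 2"
  shows "G C 0 * raise2 G w 0 + G C 1 * raise2 G w 1 = w C"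
proof -
  have "G C 0 * raise2 G w 0 + G C 1 * raise2 G w 1
      = (G C 0 * inv2 G 0 0 + G C 1 * inv2 G 1 0) * w 0 + (G C 0 * inv2 G 0 1 + G C 1 * inv2 G 1 1) * w 1"
    by (simp add: raise2_def sum_lessThan_2 algebra_simps)
  also have "\<dots> = w C"
    using inv2_right_inverse[OF sym det C, of 0] inv2_right_inverse[OF sym det C, of 1] C
    by (auto simp: less_2_cases_iff)
  finally show ?thesis .
qed

lemma sqn2_eq_raise2: "sqn2 G w = w 0 * raise2 G w 0 + w 1 * raise2 G w 1"
  by (simp add: sqn2_def raise2_def sum_lessThan_2 algebra_simps)

text \<open>\<open>M\<close> is the block metric \<open>(L2 + |b|\<^sup>2) dr\<^sup>2 + 2 b \<odot> dr + G\<close> and \<open>v\<close> the vector \<open>\<partial>\<^sub>r - b\<^sup>\<sharp>\<close>.\<close>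

lemma block_metric_on_normal:
  assumes sym: "G 0 1 = G 1 0" and det: "det2 G \<noteq> 0"
    and M00: "M 0 0 = L2 + sqn2 G b"
    and M0S: "\<And>C. M 0 (Suc C) = b C" and MS0: "\<And>C. M (Suc C) 0 = b C"
    and MSS: "\<And>C D. M (Suc C) (Suc D) = G C D"
  defines "v \<equiv> \<lambda>i. if i = 0 then 1 else - raise2 G b (i - 1)"
  shows "(\<Sum>i<3. \<Sum>j<3. M i j * v i * v j) = L2"
proof -
  have "(\<Sum>i<3. \<Sum>j<3. M i j * v i * v j)
     = M 0 0 - 2 * (b 0 * raise2 G b 0 + b 1 * raise2 G b 1)
       + raise2 G b 0 * (G 0 0 * raise2 G b 0 + G 0 1 * raise2 G b 1)
       + raise2 G b 1 * (G 1 0 * raise2 G b 0 + G 1 1 * raise2 G b 1)"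
    by (simp add: v_def sum_lessThan_3 M0S MS0 MSS numeral_2_eq_2 algebra_simps)
  also have "\<dots> = L2"
    using lower_raise2[OF sym det, of 0 b] lower_raise2[OF sym det, of 1 b] M00
    by (simp add: sqn2_eq_raise2)
  finally show ?thesis .
qed

lemma tr2_transpose: "G 0 1 = G 1 0 \<Longrightarrow> tr2 G (\<lambda>A B. X B A) = tr2 G X"
  by (simp add: tr2_def inv2_def sum_lessThan_2)

definition cov_deriv2 :: "(nat \<Rightarrow> nat \<Rightarrow> mfield) \<Rightarrow> (nat \<Rightarrow> mfield) \<Rightarrow> nat \<Rightarrow> nat \<Rightarrow> mfield" where
  "cov_deriv2 G w A B = (\<lambda>r y z. mS A (w B) r y z
     - (\<Sum>C<2. \<Sum>D<2. inv2 (\<lambda>A B. G A B r y z) C D * Chr2 G D A B r y z * w C r y z))"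

lemma div2_eq_tr2_cov_deriv2:
  "div2 G w r y z = tr2 (\<lambda>A B. G A B r y z) (\<lambda>A B. cov_deriv2 G w A B r y z)"
  by (simp add: div2_def tr2_def cov_deriv2_def Let_def)

context
  fixes G :: "nat \<Rightarrow> nat \<Rightarrow> 'a::real_normed_vector \<Rightarrow> real" and x :: 'a
  assumes G: "\<And>A B. A < 2 \<Longrightarrow> B < 2 \<Longrightarrow> G A B differentiable at x"
    and det: "det2 (\<lambda>A B. G A B x) \<noteq> 0"
begin

lemma differentiable_inv2:
  assumes "A < 2" "B < 2"
  shows "(\<lambda>x. inv2 (\<lambda>A B. G A B x) A B) differentiable at x"
proof -
  have "A = 0 \<or> A = 1" "B = 0 \<or> B = 1" using assms by auto
  moreover have "(\<lambda>x. det2 (\<lambda>A B. G A B x)) differentiable at x"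
    unfolding det2_def using G by (intro derivative_intros) auto
  ultimately show ?thesis
    unfolding inv2_def using G det by (auto intro!: derivative_intros)
qed

lemma differentiable_sqn2:
  "(\<And>A. A < 2 \<Longrightarrow> w A differentiable at x) \<Longrightarrow>
    (\<lambda>x. sqn2 (\<lambda>A B. G A B x) (\<lambda>A. w A x)) differentiable at x"
  unfolding sqn2_def by (intro differentiable_sum ballI finite_lessThan differentiable_mult differentiable_inv2) auto

lemma differentiable_raise2:
  "(\<And>A. A < 2 \<Longrightarrow> w A differentiable at x) \<Longrightarrow> C < 2 \<Longrightarrow>
    (\<lambda>x. raise2 (\<lambda>A B. G A B x) (\<lambda>A. w A x) C) differentiable at x"
  unfolding raise2_def by (intro differentiable_sum ballI finite_lessThan differentiable_mult differentiable_inv2) auto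

end

lemma
  assumes G: "\<And>A B. A < 2 \<Longrightarrow> B < 2 \<Longrightarrow> differentiable3 (G A B) r y z"
    and w: "\<And>A. A < 2 \<Longrightarrow> differentiable3 (w A) r y z"
    and det: "det2 (\<lambda>A B. G A B r y z) \<noteq> 0"
  shows differentiable3_sqn2: "differentiable3 (\<lambda>r y z. sqn2 (\<lambda>A B. G A B r y z) (\<lambda>A. w A r y z)) r y z"
    and differentiable3_raise2:
      "C < 2 \<Longrightarrow> differentiable3 (\<lambda>r y z. raise2 (\<lambda>A B. G A B r y z) (\<lambda>A. w A r y z) C) r y z"
  using differentiable_sqn2[of "\<lambda>A B. unc3 (G A B)" "(r, y, z)" "\<lambda>A. unc3 (w A)"]
    differentiable_raise2[of "\<lambda>A B. unc3 (G A B)" "(r, y, z)" "\<lambda>A. unc3 (w A)" C] assms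
  by (simp_all add: differentiable3_def unc3_eq)

section \<open>The graph \<open>M\<^sub>f\<close> in the good gauge\<close>

lemma open_M_dom: "open U \<Longrightarrow> open (M_dom r0 U)"
proof -
  assume "open U"
  moreover have "M_dom r0 U = {r0<..} \<times> U" by (auto simp: M_dom_def)
  ultimately show ?thesis by (simp add: open_Times)
qed

lemma open_spacetime_dom: "open U \<Longrightarrow> open (spacetime_dom T r0 U)"
proof -
  assume "open U"
  moreover have "spacetime_dom T r0 U = {T<..} \<times> {r0<..} \<times> U" by (auto simp: spacetime_dom_def)
  ultimately show ?thesis by (simp add: open_Times)
qed

lemma gf_simps:
  "gf Nn lam bT gam f 0 (Suc B) = bf Nn bT gam f B"
  "gf Nn lam bT gam f (Suc A) 0 = bf Nn bT gam f A"
  "gf Nn lam bT gam f (Suc A) (Suc B) = gamf Nn bT gam f A B"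
  by (auto simp: gf_def fun_eq_iff)

lemma nf_simps:
  "nf Nn lam bT gam f 0 = (\<lambda>r y z. 1 / lamf Nn lam bT gam f r y z)"
  "nf Nn lam bT gam f (Suc C) = (\<lambda>r y z.
     - raise2 (gamfp Nn bT gam f r y z) (\<lambda>A. bf Nn bT gam f A r y z) C / lamf Nn lam bT gam f r y z)"
  by (auto simp: nf_def fun_eq_iff)

lemma betaf_n_eq:
  "betaf_n Nn lam bT gam f r y z = - (mr f r y z * (atf f (alpha Nn bT gam) r y z
      + sqn2 (gamfp Nn bT gam f r y z) (\<lambda>A. betafT Nn bT gam f A r y z))) / lamf Nn lam bT gam f r y z"
  by (simp add: betaf_n_def nf_simps sum_lessThan_2 raise2_def sqn2_def bf_def
      diff_divide_distrib add_divide_distrib algebra_simps)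

locale graph_in_good_gauge =
  fixes T r0 :: real and U :: "(real \<times> real) set"
    and Nn lam :: sfield and bT :: "nat \<Rightarrow> sfield" and gam :: "nat \<Rightarrow> nat \<Rightarrow> sfield"
    and f :: mfield
  assumes U_open: "open U"
    and Nn_diff: "unc4 Nn differentiable_on spacetime_dom T r0 U"
    and lam_diff: "unc4 lam differentiable_on spacetime_dom T r0 U"
    and bT_diff: "\<And>A. A < 2 \<Longrightarrow> unc4 (bT A) differentiable_on spacetime_dom T r0 U"
    and gam_diff: "\<And>A B. A < 2 \<Longrightarrow> B < 2 \<Longrightarrow> unc4 (gam A B) differentiable_on spacetime_dom T r0 U"
    and gam_sym: "\<And>A B. A < 2 \<Longrightarrow> B < 2 \<Longrightarrow> gam A B = gam B A"
    and gam_pos: "\<And>t r y z. (t, r, y, z) \<in> spacetime_dom T r0 U \<Longrightarrow> posdef2 (\<lambda>A B. gam A B t r y z)"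
    and f_C2: "Ck_on 2 (unc3 f) (M_dom r0 U)"
    and f_range: "\<And>r y z. (r, y, z) \<in> M_dom r0 U \<Longrightarrow> T < f r y z"
    and gf_riem: "\<And>r y z. (r, y, z) \<in> M_dom r0 U \<Longrightarrow> posdef3 (\<lambda>i j. gf Nn lam bT gam f i j r y z)"
begin

lemma graph_in_spacetime_dom: "(r, y, z) \<in> M_dom r0 U \<Longrightarrow> (f r y z, r, y, z) \<in> spacetime_dom T r0 U"
  using f_range by (auto simp: M_dom_def spacetime_dom_def)

lemma gamf_sym: "A < 2 \<Longrightarrow> B < 2 \<Longrightarrow> gamf Nn bT gam f A B = gamf Nn bT gam f B A"
  using gam_sym by (auto simp: gamf_def atf_def fun_eq_iff algebra_simps)

lemma gamfp_sym: "gamfp Nn bT gam f r y z 0 1 = gamfp Nn bT gam f r y z 1 0"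
  using gamf_sym[of 0 1] by (simp add: gamfp_def)

lemma gf_sym: "i < 3 \<Longrightarrow> j < 3 \<Longrightarrow> gf Nn lam bT gam f i j = gf Nn lam bT gam f j i"
  using gamf_sym[of "i - 1" "j - 1"] by (auto simp: gf_def fun_eq_iff)

context
  fixes r y z assumes p: "(r, y, z) \<in> M_dom r0 U"
begin

lemma differentiable4_coefficients:
  shows "differentiable4 Nn (f r y z) r y z" "differentiable4 lam (f r y z) r y z"
    and "A < 2 \<Longrightarrow> differentiable4 (bT A) (f r y z) r y z"
    and "A < 2 \<Longrightarrow> B < 2 \<Longrightarrow> differentiable4 (gam A B) (f r y z) r y z"
  using Nn_diff lam_diff bT_diff gam_diff graph_in_spacetime_dom[OF p] open_spacetime_dom[OF U_open]
  by (auto simp: differentiable4_def differentiable_on_eq_differentiable_at)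

lemma differentiable4_alpha: "differentiable4 (alpha Nn bT gam) (f r y z) r y z"
proof -
  have "det2 (\<lambda>A B. gam A B (f r y z) r y z) > 0"
    using gam_sym gam_pos[OF graph_in_spacetime_dom[OF p]] by (intro det2_pos_if_posdef2) auto
  then have "(\<lambda>x. sqn2 (\<lambda>A B. unc4 (gam A B) x) (\<lambda>A. unc4 (bT A) x)) differentiable at (f r y z, r, y, z)"
    using differentiable4_coefficients
    by (intro differentiable_sqn2) (auto simp: differentiable4_def unc4_def)
  moreover have "unc4 (alpha Nn bT gam) = (\<lambda>x. (unc4 Nn x)\<^sup>2 - sqn2 (\<lambda>A B. unc4 (gam A B) x) (\<lambda>A. unc4 (bT A) x))"
    by (auto simp: unc4_def alpha_def)
  ultimately show ?thesis
    using differentiable4_coefficients(1) unfolding differentiable4_def by (auto intro!: derivative_intros)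
qed

lemma differentiable3_f:
  shows "differentiable3 f r y z" "differentiable3 (mr f) r y z" "A < 2 \<Longrightarrow> differentiable3 (mS A f) r y z"
  using Ck_on_2_differentiable3[OF open_M_dom[OF U_open] f_C2 p]
    Ck_on_2_differentiable3_m3[OF open_M_dom[OF U_open] f_C2 p, of 0]
    Ck_on_2_differentiable3_m3[OF open_M_dom[OF U_open] f_C2 p, of "Suc A"]
  by (simp_all add: m3_def)

lemma differentiable3_atf_coefficients:
  shows "differentiable3 (atf f lam) r y z" "differentiable3 (atf f (alpha Nn bT gam)) r y z"
    and "A < 2 \<Longrightarrow> differentiable3 (atf f (bT A)) r y z"
    and "A < 2 \<Longrightarrow> B < 2 \<Longrightarrow> differentiable3 (atf f (gam A B)) r y z"
  using differentiable3_atf[OF _ differentiable3_f(1)] differentiable4_coefficients differentiable4_alpha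
  by auto

lemma det2_gamf_pos: "det2 (gamfp Nn bT gam f r y z) > 0"
proof (rule det2_pos_if_posdef2[OF gamfp_sym], unfold posdef2_def, intro allI impI)
  fix v :: "nat \<Rightarrow> real" assume v: "v 0 \<noteq> 0 \<or> v 1 \<noteq> 0"
  define w where "w i = (if i = 0 then 0 else v (i - 1))" for i :: nat
  have "\<exists>i<3. w i \<noteq> 0"
  proof (cases "v 0 = 0")
    case True
    then show ?thesis using v by (intro exI[of _ 2]) (simp add: w_def)
  next
    case False
    then show ?thesis by (intro exI[of _ 1]) (simp add: w_def)
  qed
  then have "(\<Sum>i<3. \<Sum>j<3. gf Nn lam bT gam f i j r y z * w i * w j) > 0"
    using gf_riem[OF p] unfolding posdef3_def by blast
  then show "(\<Sum>A<2. \<Sum>B<2. gamfp Nn bT gam f r y z A B * v A * v B) > 0"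
    by (simp add: sum_lessThan_3 sum_lessThan_2 w_def numeral_2_eq_2 gf_simps gamfp_def)
qed

lemma lamf2_pos: "lamf2 Nn lam bT gam f r y z > 0"
proof -
  let ?G = "gamfp Nn bT gam f r y z" and ?b = "\<lambda>A. bf Nn bT gam f A r y z"
  define v where "v i = (if i = 0 then 1 else - raise2 ?G ?b (i - 1))" for i :: nat
  have "\<exists>i<3. v i \<noteq> 0" by (auto simp: v_def intro: exI[of _ 0])
  then have "0 < (\<Sum>i<3. \<Sum>j<3. gf Nn lam bT gam f i j r y z * v i * v j)"
    using gf_riem[OF p] unfolding posdef3_def by blast
  also have "\<dots> = lamf2 Nn lam bT gam f r y z"
    unfolding v_def
    by (rule block_metric_on_normal[OF gamfp_sym]) (use det2_gamf_pos in \<open>auto simp: gf_def gamfp_def\<close>)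
  finally show ?thesis .
qed

lemma lamf_nonzero: "lamf Nn lam bT gam f r y z \<noteq> 0"
  using lamf2_pos by (simp add: lamf_def)

lemma lamf_squared: "(lamf Nn lam bT gam f r y z)\<^sup>2 = lamf2 Nn lam bT gam f r y z"
  using lamf2_pos by (simp add: lamf_def)

lemma
  shows differentiable3_gamf: "A < 2 \<Longrightarrow> B < 2 \<Longrightarrow> differentiable3 (gamf Nn bT gam f A B) r y z"
    and differentiable3_betafT: "A < 2 \<Longrightarrow> differentiable3 (betafT Nn bT gam f A) r y z"
    and differentiable3_bf: "A < 2 \<Longrightarrow> differentiable3 (bf Nn bT gam f A) r y z"
    and differentiable3_nf: "k < 3 \<Longrightarrow> differentiable3 (nf Nn lam bT gam f k) r y z"
proof -
  note coeffs = differentiable3_atf_coefficients differentiable3_f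
  show gamf: "differentiable3 (gamf Nn bT gam f A B) r y z" if "A < 2" "B < 2" for A B
    unfolding gamf_def using that by (intro differentiable3_add differentiable3_diff differentiable3_mult coeffs)
  show betafT: "differentiable3 (betafT Nn bT gam f A) r y z" if "A < 2" for A
    unfolding betafT_def using that by (intro differentiable3_diff differentiable3_mult coeffs)
  show bf: "differentiable3 (bf Nn bT gam f A) r y z" if "A < 2" for A
    unfolding bf_def using that by (intro differentiable3_mult coeffs betafT)
  have det: "det2 (\<lambda>A B. gamf Nn bT gam f A B r y z) \<noteq> 0"
    using det2_gamf_pos by (simp add: gamfp_def)
  have "differentiable3 (lamf2 Nn lam bT gam f) r y z"
    unfolding lamf2_def gamfp_def
    by (intro differentiable3_diff differentiable3_mult differentiable3_power differentiable3_add
        differentiable3_sqn2 coeffs gamf betafT det)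
  then have lamf: "differentiable3 (lamf Nn lam bT gam f) r y z"
    unfolding lamf_def by (intro differentiable3_sqrt lamf2_pos)
  show "differentiable3 (nf Nn lam bT gam f k) r y z" if "k < 3" for k
  proof (cases k)
    case 0
    show ?thesis unfolding 0 nf_simps
      by (intro differentiable3_divide differentiable3_const lamf lamf_nonzero)
  next
    case (Suc C)
    then have "C < 2" using that by simp
    then show ?thesis unfolding Suc nf_simps gamfp_def
      by (intro differentiable3_divide differentiable3_minus differentiable3_raise2 gamf bf det lamf
          lamf_nonzero)
  qed
qed

lemma mr_gamf:
  assumes A: "A < 2" and B: "B < 2"
  shows "mr (gamf Nn bT gam f A B) r y z = Qr Nn bT gam f r y z (dSf f r y z) A B
     + mr f r y z * Qt Nn bT gam f r y z (dSf f r y z) A B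
     + betafT Nn bT gam f A r y z * mS B (mr f) r y z + betafT Nn bT gam f B r y z * mS A (mr f) r y z"
proof -
  have D: "differentiable3 (atf f (gam A B)) r y z" "differentiable3 (atf f (bT A)) r y z"
    "differentiable3 (atf f (bT B)) r y z" "differentiable3 (atf f (alpha Nn bT gam)) r y z"
    "differentiable3 (mS A f) r y z" "differentiable3 (mS B f) r y z"
    using differentiable3_atf_coefficients differentiable3_f A B by auto
  have "mr (gamf Nn bT gam f A B) r y z = m3 0 (gamf Nn bT gam f A B) r y z" by (simp add: m3_def)
  also have "\<dots> = m3 0 (atf f (gam A B)) r y z
      + (m3 0 (atf f (bT A)) r y z * mS B f r y z + atf f (bT A) r y z * m3 0 (mS B f) r y z)
      + (m3 0 (atf f (bT B)) r y z * mS A f r y z + atf f (bT B) r y z * m3 0 (mS A f) r y z)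
      - ((m3 0 (atf f (alpha Nn bT gam)) r y z * mS A f r y z
          + atf f (alpha Nn bT gam) r y z * m3 0 (mS A f) r y z) * mS B f r y z
         + atf f (alpha Nn bT gam) r y z * mS A f r y z * m3 0 (mS B f) r y z)"
    unfolding gamf_def
    by (simp only: m3_diff m3_add m3_mult differentiable3_add differentiable3_diff differentiable3_mult D
        zero_less_numeral numeral_3_eq_3 zero_less_Suc)
  also have "\<dots> = Qr Nn bT gam f r y z (dSf f r y z) A B
     + mr f r y z * Qt Nn bT gam f r y z (dSf f r y z) A B
     + betafT Nn bT gam f A r y z * mS B (mr f) r y z + betafT Nn bT gam f B r y z * mS A (mr f) r y z"
    using mr_atf[OF differentiable4_coefficients(4)[OF A B] differentiable3_f(1)]
      mr_atf[OF differentiable4_coefficients(3)[OF A] differentiable3_f(1)]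
      mr_atf[OF differentiable4_coefficients(3)[OF B] differentiable3_f(1)]
      mr_atf[OF differentiable4_alpha differentiable3_f(1)]
      mS_mr_commute[OF open_M_dom[OF U_open] f_C2 p A] mS_mr_commute[OF open_M_dom[OF U_open] f_C2 p B]
    by (simp add: m3_def Qr_def Qt_def dSf_def betafT_def atf_def algebra_simps)
  finally show ?thesis .
qed

lemma dtgamf_eq_Qt:
  assumes A: "A < 2" and B: "B < 2"
  shows "dtgamf Nn bT gam f A B r y z = Qt Nn bT gam f r y z (dSf f r y z) A B"
proof -
  note pt = has_real_derivative_pt[OF differentiable4_coefficients(4)[OF A B]]
    has_real_derivative_pt[OF differentiable4_coefficients(3)[OF A]]
    has_real_derivative_pt[OF differentiable4_coefficients(3)[OF B]]
    has_real_derivative_pt[OF differentiable4_alpha]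
  have "((\<lambda>s. gam A B s r y z + bT A s r y z * mS B f r y z + bT B s r y z * mS A f r y z
      - alpha Nn bT gam s r y z * mS A f r y z * mS B f r y z) has_real_derivative
      Qt Nn bT gam f r y z (dSf f r y z) A B) (at (f r y z))"
    unfolding Qt_def atf_def dSf_def
    by (intro DERIV_diff DERIV_add DERIV_cmult_right pt)
  then show ?thesis by (simp add: dtgamf_def DERIV_imp_deriv)
qed

end

lemma gf_nf_orthogonal:
  assumes "(r, y, z) \<in> M_dom r0 U" "B < 2"
  shows "(\<Sum>k<3. gf Nn lam bT gam f k (Suc B) r y z * nf Nn lam bT gam f k r y z) = 0"
proof -
  let ?G = "gamfp Nn bT gam f r y z" and ?b = "\<lambda>A. bf Nn bT gam f A r y z"
  have "?G 0 B = ?G B 0" "?G 1 B = ?G B 1"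
    using gamf_sym[of 0 B] gamf_sym[of 1 B] assms(2) by (auto simp: gamfp_def)
  moreover have "(\<Sum>k<3. gf Nn lam bT gam f k (Suc B) r y z * nf Nn lam bT gam f k r y z)
      = (?b B - (?G 0 B * raise2 ?G ?b 0 + ?G 1 B * raise2 ?G ?b 1)) / lamf Nn lam bT gam f r y z"
    by (simp add: sum_lessThan_3 numeral_2_eq_2 gf_simps nf_simps gamfp_def diff_divide_distrib add_divide_distrib)
  ultimately show ?thesis
    using lower_raise2[OF gamfp_sym det2_gamf_pos[OF assms(1), THEN less_imp_neq, THEN not_sym] assms(2)]
    by simp
qed

context
  fixes r y z assumes p: "(r, y, z) \<in> M_dom r0 U"
begin

lemma IIf_eq_Chr3:
  assumes A: "A < 2" and B: "B < 2"
  shows "IIf Nn lam bT gam f A B r y z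
    = - (\<Sum>j<3. Chr3 (gf Nn lam bT gam f) j (Suc A) (Suc B) r y z * nf Nn lam bT gam f j r y z)"
proof -
  let ?g = "\<lambda>k. gf Nn lam bT gam f k (Suc B)" and ?n = "nf Nn lam bT gam f"
  have dg: "differentiable3 (?g k) r y z" if "k < 3" for k
    using that differentiable3_bf[OF p B] differentiable3_gamf[OF p _ B]
    by (cases k) (auto simp: gf_simps)
  have dn: "differentiable3 (?n k) r y z" if "k < 3" for k
    using differentiable3_nf[OF p that] .
  have "Suc A < 3" using A by simp
  \<comment> \<open>differentiate the identity \<open>g\<^sub>f(n\<^sub>f, \<partial>\<^sub>B) = 0\<close> along \<open>\<partial>\<^sub>A\<close>\<close>
  have "0 = m3 (Suc A) (\<lambda>r y z. \<Sum>k<3. ?g k r y z * ?n k r y z) r y z"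
    using gf_nf_orthogonal[OF _ B] p \<open>Suc A < 3\<close>
    by (intro m3_eq_0_if_locally_0[OF open_M_dom[OF U_open], symmetric]) (auto simp: unc3_def)
  also have "\<dots> = (\<Sum>k<3. m3 (Suc A) (\<lambda>r y z. ?g k r y z * ?n k r y z) r y z)"
    by (rule m3_sum) (use dg dn \<open>Suc A < 3\<close> in \<open>auto intro: differentiable3_mult\<close>)
  also have "\<dots> = (\<Sum>k<3. m3 (Suc A) (?g k) r y z * ?n k r y z + ?g k r y z * m3 (Suc A) (?n k) r y z)"
    by (rule sum.cong[OF refl]) (use dg dn \<open>Suc A < 3\<close> m3_mult in auto)
  finally have dual: "(\<Sum>k<3. ?g k r y z * m3 (Suc A) (?n k) r y z)
      = - (\<Sum>k<3. m3 (Suc A) (?g k) r y z * ?n k r y z)"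
    by (simp add: sum.distrib eq_neg_iff_add_eq_0)
  have "IIf Nn lam bT gam f A B r y z = (\<Sum>k<3. ?g k r y z * m3 (Suc A) (?n k) r y z)
      + (\<Sum>j<3. Chr3 (gf Nn lam bT gam f) (Suc B) (Suc A) j r y z * ?n j r y z)"
    by (simp add: IIf_def)
  also have "\<dots> = (\<Sum>j<3. (Chr3 (gf Nn lam bT gam f) (Suc B) (Suc A) j r y z - m3 (Suc A) (?g j) r y z)
      * ?n j r y z)"
    unfolding dual by (simp add: sum_subtractf left_diff_distrib)
  also have "\<dots> = - (\<Sum>j<3. Chr3 (gf Nn lam bT gam f) j (Suc A) (Suc B) r y z * ?n j r y z)"
    unfolding sum_negf[symmetric]
  proof (rule sum.cong[OF refl])
    fix j assume "j \<in> {..<3::nat}"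
    then have "gf Nn lam bT gam f j (Suc B) = gf Nn lam bT gam f (Suc B) j"
      "gf Nn lam bT gam f j (Suc A) = gf Nn lam bT gam f (Suc A) j"
      using gf_sym A B by auto
    then show "(Chr3 (gf Nn lam bT gam f) (Suc B) (Suc A) j r y z - m3 (Suc A) (?g j) r y z) * ?n j r y z
      = - (Chr3 (gf Nn lam bT gam f) j (Suc A) (Suc B) r y z * ?n j r y z)"
      by (simp add: Chr3_def field_simps)
  qed
  finally show ?thesis .
qed

lemma IIf_eq_cov_deriv2:
  assumes A: "A < 2" and B: "B < 2"
  shows "2 * lamf Nn lam bT gam f r y z * IIf Nn lam bT gam f A B r y z
    = Qr Nn bT gam f r y z (dSf f r y z) A B + mr f r y z * Qt Nn bT gam f r y z (dSf f r y z) A B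
      - mr f r y z * (cov_deriv2 (gamf Nn bT gam f) (betafT Nn bT gam f) A B r y z
                      + cov_deriv2 (gamf Nn bT gam f) (betafT Nn bT gam f) B A r y z)"
proof -
  let ?G = "gamfp Nn bT gam f r y z" and ?\<gamma> = "gamf Nn bT gam f" and ?\<beta> = "betafT Nn bT gam f"
  let ?\<Gamma> = "\<lambda>A B. \<Sum>C<2. \<Sum>D<2. inv2 ?G C D * Chr2 ?\<gamma> D A B r y z * ?\<beta> C r y z"
  let ?m = "mr f r y z"
  have "2 * lamf Nn lam bT gam f r y z * IIf Nn lam bT gam f A B r y z
    = mr (?\<gamma> A B) r y z - mS A (bf Nn bT gam f B) r y z - mS B (bf Nn bT gam f A) r y z
      + (\<Sum>C<2. raise2 ?G (\<lambda>D. bf Nn bT gam f D r y z) C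
          * (mS A (?\<gamma> B C) r y z + mS B (?\<gamma> A C) r y z - mS C (?\<gamma> A B) r y z))"
    using lamf_nonzero[OF p]
    by (simp add: IIf_eq_Chr3[OF A B] sum_lessThan_3 sum_lessThan_2 numeral_2_eq_2 Chr3_def gf_simps nf_simps
        m3_def field_simps)
  moreover have "mS C (bf Nn bT gam f D) r y z = mS C (mr f) r y z * ?\<beta> D r y z + ?m * mS C (?\<beta> D) r y z"
    if "C < 2" "D < 2" for C D
    using m3_mult[OF differentiable3_f(2)[OF p] differentiable3_betafT[OF p that(2)], of "Suc C"] that
    by (simp add: bf_def m3_def)
  moreover have "(\<Sum>C<2. raise2 ?G (\<lambda>D. bf Nn bT gam f D r y z) C
          * (mS A (?\<gamma> B C) r y z + mS B (?\<gamma> A C) r y z - mS C (?\<gamma> A B) r y z))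
      = ?m * (?\<Gamma> A B + ?\<Gamma> B A)"
  proof -
    have "inv2 ?G 1 0 = inv2 ?G 0 1" using inv2_sym[OF gamfp_sym[of r y z]] by simp
    then show ?thesis
      using gamf_sym[OF B A]
      by (simp add: Chr2_def raise2_def bf_def sum_lessThan_2 field_simps)
  qed
  ultimately show ?thesis
    using mr_gamf[OF p A B] A B by (simp add: cov_deriv2_def gamfp_def algebra_simps)
qed

lemma Hf_div_lamf:
  "Hf Nn lam bT gam f r y z / lamf Nn lam bT gam f r y z
    = 1 / (2 * lamf2 Nn lam bT gam f r y z) *
       (tr2 (gamfp Nn bT gam f r y z) (Qr Nn bT gam f r y z (dSf f r y z))
        + mr f r y z * tr2 (gamfp Nn bT gam f r y z) (Qt Nn bT gam f r y z (dSf f r y z))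
        - 2 * mr f r y z * div2 (gamf Nn bT gam f) (betafT Nn bT gam f) r y z)"
proof -
  let ?G = "gamfp Nn bT gam f r y z" and ?L = "lamf Nn lam bT gam f r y z" and ?m = "mr f r y z"
  let ?cov = "\<lambda>A B. cov_deriv2 (gamf Nn bT gam f) (betafT Nn bT gam f) A B r y z"
  have "2 * ?L * Hf Nn lam bT gam f r y z = tr2 ?G (\<lambda>A B. 2 * ?L * IIf Nn lam bT gam f A B r y z)"
    by (simp add: Hf_def tr2_def sum_distrib_left algebra_simps)
  also have "\<dots> = tr2 ?G (\<lambda>A B. Qr Nn bT gam f r y z (dSf f r y z) A B
      + ?m * Qt Nn bT gam f r y z (dSf f r y z) A B - ?m * (?cov A B + ?cov B A))"
    by (simp add: tr2_def sum_lessThan_2 IIf_eq_cov_deriv2)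
  also have "\<dots> = tr2 ?G (Qr Nn bT gam f r y z (dSf f r y z)) + ?m * tr2 ?G (Qt Nn bT gam f r y z (dSf f r y z))
      - ?m * (tr2 ?G ?cov + tr2 ?G (\<lambda>A B. ?cov B A))"
    by (simp add: tr2_def sum_lessThan_2 algebra_simps)
  also have "\<dots> = tr2 ?G (Qr Nn bT gam f r y z (dSf f r y z)) + ?m * tr2 ?G (Qt Nn bT gam f r y z (dSf f r y z))
      - 2 * ?m * div2 (gamf Nn bT gam f) (betafT Nn bT gam f) r y z"
    using tr2_transpose[OF gamfp_sym[of r y z], of ?cov] by (simp add: div2_eq_tr2_cov_deriv2 gamfp_def)
  finally have "2 * ?L * Hf Nn lam bT gam f r y z
    = tr2 ?G (Qr Nn bT gam f r y z (dSf f r y z)) + ?m * tr2 ?G (Qt Nn bT gam f r y z (dSf f r y z))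
      - 2 * ?m * div2 (gamf Nn bT gam f) (betafT Nn bT gam f) r y z" (is "_ = ?R") .
  have "Hf Nn lam bT gam f r y z / ?L = 2 * ?L * Hf Nn lam bT gam f r y z / (2 * ?L\<^sup>2)"
    using lamf_nonzero[OF p] by (simp add: power2_eq_square)
  then show ?thesis
    unfolding \<open>2 * ?L * Hf Nn lam bT gam f r y z = ?R\<close> lamf_squared[OF p] by simp
qed

lemma Hf_div_lamf_if_TMCF:
  assumes tmcf: "TMCF_at Nn lam bT gam f r y z" and lam: "atf f lam r y z \<noteq> 0"
  shows "Hf Nn lam bT gam f r y z / lamf Nn lam bT gam f r y z
    = 1 / (2 * (atf f lam r y z)\<^sup>2) * tr2 (gamfp Nn bT gam f r y z) (Qr Nn bT gam f r y z (dSf f r y z))"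
proof -
  let ?G = "gamfp Nn bT gam f r y z" and ?L = "lamf Nn lam bT gam f r y z" and ?m = "mr f r y z"
  define X where "X = Hf Nn lam bT gam f r y z / ?L"
  let ?TQr = "tr2 ?G (Qr Nn bT gam f r y z (dSf f r y z))"
  let ?TQt = "tr2 ?G (Qt Nn bT gam f r y z (dSf f r y z))"
  let ?Dv = "div2 (gamf Nn bT gam f) (betafT Nn bT gam f) r y z"
  let ?a = "atf f (alpha Nn bT gam) r y z + sqn2 ?G (\<lambda>A. betafT Nn bT gam f A r y z)"
  have "tr2 ?G (\<lambda>A B. dtgamf Nn bT gam f A B r y z) = ?TQt"
    unfolding tr2_def by (intro sum.cong refl) (simp add: dtgamf_eq_Qt[OF p])
  then have "?TQt - 2 * ?Dv = 2 * Hf Nn lam bT gam f r y z * betaf_n Nn lam bT gam f r y z"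
    using tmcf by (simp add: TMCF_at_def)
  also have "\<dots> = - 2 * X * ?m * ?a"
    using lamf_nonzero[OF p] by (simp add: betaf_n_eq X_def)
  finally have tmcf': "?TQt - 2 * ?Dv = - 2 * X * ?m * ?a" .
  have "X * (2 * lamf2 Nn lam bT gam f r y z) = ?TQr + ?m * (?TQt - 2 * ?Dv)"
    using Hf_div_lamf lamf2_pos[OF p] by (simp add: X_def field_simps)
  moreover have "(atf f lam r y z)\<^sup>2 = lamf2 Nn lam bT gam f r y z + ?a * ?m\<^sup>2"
    by (simp add: lamf2_def)
  ultimately have "X * (2 * (atf f lam r y z)\<^sup>2) = ?TQr"
    unfolding tmcf' by (simp add: algebra_simps power2_eq_square)
  then show ?thesis using lam by (simp add: X_def field_simps)
qed

end

end

lemma smooth_on_set_differentiable_on: "smooth_on_set G S \<Longrightarrow> G differentiable_on S"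
  unfolding smooth_on_set_def by (metis Ck_on.simps(2) One_nat_def)

theorem mainTheorem7:
  fixes T r0 :: real and U :: "(real \<times> real) set"
    and Nn lam :: sfield and bT :: "nat \<Rightarrow> sfield" and gam :: "nat \<Rightarrow> nat \<Rightarrow> sfield"
    and f :: mfield
  assumes U_open: "open U"
    and Nn_smooth: "smooth_on_set (unc4 Nn) (spacetime_dom T r0 U)"
    and lam_smooth: "smooth_on_set (unc4 lam) (spacetime_dom T r0 U)"
    and bT_smooth: "\<forall>A<2. smooth_on_set (unc4 (bT A)) (spacetime_dom T r0 U)"
    and gam_smooth: "\<forall>A<2. \<forall>B<2. smooth_on_set (unc4 (gam A B)) (spacetime_dom T r0 U)"
    and gam_sym: "\<forall>A<2. \<forall>B<2. gam A B = gam B A"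
    and gam_pos: "\<forall>(t, r, y, z)\<in>spacetime_dom T r0 U. posdef2 (\<lambda>A B. gam A B t r y z)"
    and lam_pos: "\<forall>(t, r, y, z)\<in>spacetime_dom T r0 U. lam t r y z > 0"
    and f_C2: "Ck_on 2 (unc3 f) (M_dom r0 U)"
    and f_range: "\<forall>(r, y, z)\<in>M_dom r0 U. T < f r y z"
    and gf_riem: "\<forall>(r, y, z)\<in>M_dom r0 U. posdef3 (\<lambda>i j. gf Nn lam bT gam f i j r y z)"
  shows "(\<forall>(r, y, z)\<in>M_dom r0 U.
            Hf Nn lam bT gam f r y z / lamf Nn lam bT gam f r y z
          = 1 / (2 * lamf2 Nn lam bT gam f r y z) *
             (tr2 (gamfp Nn bT gam f r y z) (Qr Nn bT gam f r y z (dSf f r y z))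
              + mr f r y z * tr2 (gamfp Nn bT gam f r y z) (Qt Nn bT gam f r y z (dSf f r y z))
              - 2 * mr f r y z * div2 (gamf Nn bT gam f) (betafT Nn bT gam f) r y z))
       \<and> ((\<forall>(r, y, z)\<in>M_dom r0 U. TMCF_at Nn lam bT gam f r y z) \<longrightarrow>
          (\<forall>(r, y, z)\<in>M_dom r0 U.
            Hf Nn lam bT gam f r y z / lamf Nn lam bT gam f r y z
          = 1 / (2 * (atf f lam r y z)^2) *
             tr2 (gamfp Nn bT gam f r y z) (Qr Nn bT gam f r y z (dSf f r y z))))"
proof -
  interpret graph_in_good_gauge T r0 U Nn lam bT gam f
    using assms by unfold_locales (auto simp: smooth_on_set_differentiable_on)
  have "atf f lam r y z \<noteq> 0" if "(r, y, z) \<in> M_dom r0 U" for r y z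
    using lam_pos graph_in_spacetime_dom[OF that] by (fastforce simp: atf_def)
  then show ?thesis
    using Hf_div_lamf Hf_div_lamf_if_TMCF by fast
qed

end
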